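(* Let $n\ge5$. There is no isomorphism preserving the structure of $\mathbb{Z}_2^n$-graded algebra between $\mathbb{O}_{n,0}$ or $\mathbb{O}_{0,n}$ and any $\mathbb{O}_{p,q}$ with $p+q=n$, $p,q\ge1$. Moreover, in the same sense of non-isomorphism: if $n=4k$, the algebras $\mathbb{O}_{n-1,1}$, $\mathbb{O}_{n-2,2}$, $\mathbb{O}_{n-4,4}$ are pairwise non-isomorphic; if $n=4k+1$, $\mathbb{O}_{n-1,1}\not\simeq\mathbb{O}_{n-2,2}$; if $n=4k+2$, the algebras $\mathbb{O}_{n-1,1}$, $\mathbb{O}_{n-2,2}$, $\mathbb{O}_{n-3,3}$ are pairwise non-isomorphic; if $n=4k+3$, $\mathbb{O}_{n-1,1}\not\simeq\mathbb{O}_{n-3,3}$.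
   Context: $\mathbb{Z}_2=\{0,1\}$. For $p+q=n\ge3$, $\mathbb{O}_{p,q}$ is the real algebra with basis $\{u_x: x\in\mathbb{Z}_2^n\}$ and product $u_x\cdot u_y=(-1)^{f(x,y)}u_{x+y}$, where $f(x,y)=\sum_{1\le i<j<k\le n}(x_ix_jy_k+x_iy_jx_k+y_ix_jx_k)+\sum_{1\le i\le j\le n}x_iy_j+\sum_{1\le i\le p}x_iy_i$. An isomorphism preserving the graded structure is an algebra isomorphism sending each homogeneous element (scalar multiple of some $u_x$) to a homogeneous element. *)

theory Defs
  imports Complex_Main
begin

text \<open>Indices of the grading group Z_2^n are modelled as functions nat => bool
  vanishing outside {0..<n} (coordinate i of the paper is coordinate i-1 here).\<close>

type_synonym idx = "nat \<Rightarrow> bool"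

definition grp :: "nat \<Rightarrow> idx set" where
  "grp n = {x. \<forall>i\<ge>n. \<not> x i}"

definition gadd :: "idx \<Rightarrow> idx \<Rightarrow> idx" where
  "gadd x y = (\<lambda>i. x i \<noteq> y i)"

text \<open>The twisting function f(x,y) for O_{p,q}, n = p + q (computed in nat; only parity matters).\<close>
definition twist :: "nat \<Rightarrow> nat \<Rightarrow> idx \<Rightarrow> idx \<Rightarrow> nat" where
  "twist n p x y =
     (\<Sum>i<n. \<Sum>j<n. \<Sum>k<n. if i < j \<and> j < k then
         of_bool (x i \<and> x j \<and> y k) + of_bool (x i \<and> y j \<and> x k) + of_bool (y i \<and> x j \<and> x k)
       else 0)
   + (\<Sum>i<n. \<Sum>j<n. if i \<le> j then of_bool (x i \<and> y j) else 0)
   + (\<Sum>i<p. of_bool (x i \<and> y i))"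

definition octc :: "nat \<Rightarrow> (idx \<Rightarrow> real) set" where
  "octc n = {a. \<forall>z. z \<notin> grp n \<longrightarrow> a z = 0}"

definition ubase :: "idx \<Rightarrow> (idx \<Rightarrow> real)" where
  "ubase x = (\<lambda>z. if z = x then 1 else 0)"

definition oct_mult :: "nat \<Rightarrow> nat \<Rightarrow> (idx \<Rightarrow> real) \<Rightarrow> (idx \<Rightarrow> real) \<Rightarrow> (idx \<Rightarrow> real)" where
  "oct_mult p q a b = (\<lambda>z. \<Sum>x\<in>grp (p+q). \<Sum>y\<in>grp (p+q).
      if gadd x y = z then (-1) ^ twist (p+q) p x y * a x * b y else 0)"

definition homogeneous :: "nat \<Rightarrow> (idx \<Rightarrow> real) \<Rightarrow> bool" where
  "homogeneous n a \<longleftrightarrow> (\<exists>c. \<exists>x\<in>grp n. a = (\<lambda>z. c * ubase x z))"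

definition graded_iso :: "nat \<Rightarrow> nat \<Rightarrow> nat \<Rightarrow> nat \<Rightarrow> ((idx \<Rightarrow> real) \<Rightarrow> (idx \<Rightarrow> real)) \<Rightarrow> bool" where
  "graded_iso p q p' q' \<phi> \<longleftrightarrow>
     p + q = p' + q' \<and>
     bij_betw \<phi> (octc (p+q)) (octc (p'+q')) \<and>
     (\<forall>a\<in>octc (p+q). \<forall>b\<in>octc (p+q). \<phi> (\<lambda>z. a z + b z) = (\<lambda>z. \<phi> a z + \<phi> b z)) \<and>
     (\<forall>c. \<forall>a\<in>octc (p+q). \<phi> (\<lambda>z. c * a z) = (\<lambda>z. c * \<phi> a z)) \<and>
     (\<forall>a\<in>octc (p+q). \<forall>b\<in>octc (p+q). \<phi> (oct_mult p q a b) = oct_mult p' q' (\<phi> a) (\<phi> b)) \<and>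
     (\<forall>a\<in>octc (p+q). homogeneous (p+q) a \<longrightarrow> homogeneous (p'+q') (\<phi> a))"

definition graded_isomorphic :: "nat \<Rightarrow> nat \<Rightarrow> nat \<Rightarrow> nat \<Rightarrow> bool" where
  "graded_isomorphic p q p' q' \<longleftrightarrow> (\<exists>\<phi>. graded_iso p q p' q' \<phi>)"

definition graded_noniso :: "nat \<Rightarrow> nat \<Rightarrow> nat \<Rightarrow> nat \<Rightarrow> bool" where
  "graded_noniso p q p' q' \<longleftrightarrow> \<not> graded_isomorphic p q p' q' \<and> \<not> graded_isomorphic p' q' p q"

end

theory Submission
  imports Defs
begin

text \<open>A graded isomorphism sends each \<open>u\<^sub>x\<close> to a nonzero multiple of some \<open>u\<^sub>\<sigma>\<^sub>(\<^sub>x\<^sub>)\<close>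
  with \<open>\<sigma>\<close> a bijection, and it fixes the unit \<open>u\<^sub>0\<close>; comparing \<open>u\<^sub>x u\<^sub>x = \<plusminus>u\<^sub>0\<close> on both sides,
  it preserves the signature \<open>\<Sum>\<^sub>x (-1)^f(x,x)\<close>. For \<open>x\<close> of weight \<open>w\<close> one has
  \<open>f(x,x) = 3 C(w,3) + C(w,2) + w + #{i \<le> p. x\<^sub>i = 1}\<close>, and the first three terms are even exactly
  when \<open>4\<close> divides \<open>w\<close>. Filtering the generating function \<open>(1 - t)^p (1 + t)^q\<close> with the fourth
  roots of unity evaluates the signature of \<open>O\<^sub>p\<^sub>,\<^sub>q\<close>: for \<open>p, q \<ge> 1\<close> it is
  \<open>((1-i)^p (1+i)^q + (1+i)^p (1-i)^q)/2\<close>, of modulus at most \<open>\<surd>2^n\<close>, whereas for \<open>O\<^sub>n\<^sub>,\<^sub>0\<close>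
  and \<open>O\<^sub>0\<^sub>,\<^sub>n\<close> an extra term \<open>\<plusminus>2^(n-1)\<close> makes it larger once \<open>n \<ge> 5\<close>.
  Since \<open>(1 \<plusminus> i)^4 = -4\<close>, the signatures of \<open>O\<^sub>n\<^sub>-\<^sub>t\<^sub>,\<^sub>t\<close> for small \<open>t\<close> are explicit
  multiples of \<open>(-4)^k\<close>, which separate the remaining pairs.\<close>

section \<open>Weights and the diagonal of the twist\<close>

lemma sum_strict_pairs_lessThan_Suc:
  fixes F :: "nat \<Rightarrow> nat \<Rightarrow> 'a::comm_monoid_add"
  shows "(\<Sum>i<Suc N. \<Sum>j<Suc N. if i < j then F i j else 0) =
    (\<Sum>i<N. \<Sum>j<N. if i < j then F i j else 0) + (\<Sum>i<N. F i N)"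
  by (simp add: sum.distrib sum.neutral)

lemma sum_pairs_le_lessThan_Suc:
  fixes F :: "nat \<Rightarrow> nat \<Rightarrow> 'a::comm_monoid_add"
  shows "(\<Sum>i<Suc N. \<Sum>j<Suc N. if i \<le> j then F i j else 0) =
    (\<Sum>i<N. \<Sum>j<N. if i \<le> j then F i j else 0) + (\<Sum>i<N. F i N) + F N N"
  by (simp add: sum.distrib sum.neutral add.assoc)

lemma sum_strict_triples_lessThan_Suc:
  fixes F :: "nat \<Rightarrow> nat \<Rightarrow> nat \<Rightarrow> 'a::comm_monoid_add"
  shows "(\<Sum>i<Suc N. \<Sum>j<Suc N. \<Sum>k<Suc N. if i < j \<and> j < k then F i j k else 0) =
    (\<Sum>i<N. \<Sum>j<N. \<Sum>k<N. if i < j \<and> j < k then F i j k else 0) +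
    (\<Sum>i<N. \<Sum>j<N. if i < j then F i j N else 0)"
proof -
  have "(\<Sum>i<Suc N. \<Sum>j<Suc N. \<Sum>k<Suc N. if i < j \<and> j < k then F i j k else 0) =
      (\<Sum>i<N. \<Sum>j<N. (\<Sum>k<N. if i < j \<and> j < k then F i j k else 0) + (if i < j then F i j N else 0))"
    by (simp add: sum.neutral)
  then show ?thesis
    by (simp add: sum.distrib)
qed

definition weight :: "nat \<Rightarrow> idx \<Rightarrow> nat" where
  "weight n x = (\<Sum>i<n. of_bool (x i))"

lemma weight_Suc: "weight (Suc n) x = weight n x + of_bool (x n)"
  by (simp add: weight_def)

lemma strict_pairs_eq_weight_choose:
  "(\<Sum>i<n. \<Sum>j<n. if i < j then of_bool (x i \<and> x j) else 0) = weight n x choose 2"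
proof (induction n)
  case (Suc n)
  have "(\<Sum>i<Suc n. \<Sum>j<Suc n. if i < j then of_bool (x i \<and> x j) else 0) =
      (\<Sum>i<n. \<Sum>j<n. if i < j then of_bool (x i \<and> x j) else 0) + (if x n then weight n x else 0)"
    unfolding weight_def by (subst sum_strict_pairs_lessThan_Suc) (auto intro!: sum.cong)
  then show ?case
    by (simp add: Suc weight_Suc numeral_2_eq_2)
qed (simp add: weight_def)

lemma strict_triples_eq_weight_choose:
  "(\<Sum>i<n. \<Sum>j<n. \<Sum>k<n. if i < j \<and> j < k then of_bool (x i \<and> x j \<and> x k) else 0) =
    weight n x choose 3"
proof (induction n)
  case (Suc n)
  have "(\<Sum>i<Suc n. \<Sum>j<Suc n. \<Sum>k<Suc n. if i < j \<and> j < k then of_bool (x i \<and> x j \<and> x k) else 0) =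
      (\<Sum>i<n. \<Sum>j<n. \<Sum>k<n. if i < j \<and> j < k then of_bool (x i \<and> x j \<and> x k) else 0) +
      (if x n then weight n x choose 2 else 0)"
    unfolding strict_pairs_eq_weight_choose[symmetric]
    by (subst sum_strict_triples_lessThan_Suc) (auto simp: sum.neutral intro!: sum.cong)
  then show ?case
    by (simp add: Suc weight_Suc numeral_3_eq_3 numeral_2_eq_2)
qed (simp add: weight_def)

lemma pairs_le_eq_weight_choose:
  "(\<Sum>i<n. \<Sum>j<n. if i \<le> j then of_bool (x i \<and> x j) else 0) = (weight n x choose 2) + weight n x"
proof (induction n)
  case (Suc n)
  have "(\<Sum>i<Suc n. \<Sum>j<Suc n. if i \<le> j then of_bool (x i \<and> x j) else 0) =
      (\<Sum>i<n. \<Sum>j<n. if i \<le> j then of_bool (x i \<and> x j) else 0) + (if x n then weight n x + 1 else 0)"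
    unfolding weight_def by (subst sum_pairs_le_lessThan_Suc) (auto intro!: sum.cong)
  then show ?case
    by (simp add: Suc weight_Suc numeral_2_eq_2)
qed (simp add: weight_def)

lemma twist_diag:
  "twist n p x x =
    3 * (weight n x choose 3) + (weight n x choose 2) + weight n x + (\<Sum>i<p. of_bool (x i))"
proof -
  have "(if c then a + a + a else 0) = 3 * (if c then a else 0)" for c and a :: nat
    by simp
  then show ?thesis
    unfolding twist_def
    by (simp only: simp_thms sum_distrib_left[symmetric] strict_triples_eq_weight_choose
        pairs_le_eq_weight_choose)
qed

lemma neg_one_power_choose_two:
  "(-1::'a::ring_1) ^ (w choose 2) = (if w mod 4 < 2 then 1 else -1)"
proof (induction w)
  case (Suc w)
  have Suc_choose: "Suc w choose 2 = (w choose 2) + w"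
    by (simp add: numeral_2_eq_2)
  have "w mod 4 = 0 \<or> w mod 4 = 1 \<or> w mod 4 = 2 \<or> w mod 4 = 3"
    by presburger
  moreover have "even w \<longleftrightarrow> w mod 4 = 0 \<or> w mod 4 = 2"
    by presburger
  ultimately show ?case
    unfolding Suc_choose power_add Suc by (elim disjE) (simp_all add: mod_Suc)
qed (simp add: numeral_2_eq_2)

lemma neg_one_power_diag_weight:
  "(-1::'a::ring_1) ^ (3 * (w choose 3) + (w choose 2) + w) = (if 4 dvd w then 1 else -1)"
proof (induction w)
  case (Suc w)
  have Suc_choose: "3 * (Suc w choose 3) + (Suc w choose 2) + Suc w =
      (3 * (w choose 3) + (w choose 2) + w) + 3 * (w choose 2) + w + 1"
    by (simp add: numeral_3_eq_3 numeral_2_eq_2)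
  have "(-1::'a) ^ (3 * (Suc w choose 3) + (Suc w choose 2) + Suc w) =
      (-1) ^ (3 * (w choose 3) + (w choose 2) + w) * ((-1) ^ (w choose 2)) ^ 3 * (-1) ^ w * (-1)"
    unfolding Suc_choose power_add by (simp add: mult.commute flip: power_mult)
  moreover have "w mod 4 = 0 \<or> w mod 4 = 1 \<or> w mod 4 = 2 \<or> w mod 4 = 3"
    by presburger
  moreover have "even w \<longleftrightarrow> w mod 4 = 0 \<or> w mod 4 = 2"
    by presburger
  ultimately show ?case
    unfolding Suc neg_one_power_choose_two by (elim disjE) (simp_all add: mod_Suc dvd_eq_mod_eq_0)
qed (simp add: numeral_3_eq_3 numeral_2_eq_2)

lemma power_mod_four: "(z::'a::monoid_mult) ^ 4 = 1 \<Longrightarrow> z ^ w = z ^ (w mod 4)"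
proof -
  assume z: "z ^ 4 = 1"
  have "z ^ w = z ^ (4 * (w div 4) + w mod 4)" by simp
  also have "\<dots> = z ^ (w mod 4)" by (simp only: power_add power_mult z) simp
  finally show ?thesis .
qed

lemma sign_four_dvd_roots_of_unity:
  "(if 4 dvd w then 1 else -1 :: complex) = (-1 + \<i> ^ w + (-1) ^ w + (-\<i>) ^ w) / 2"
proof -
  have "\<i> ^ w = \<i> ^ (w mod 4)" "(-\<i>) ^ w = (-\<i>) ^ (w mod 4)" "(-1::complex) ^ w = (-1) ^ (w mod 4)"
    by (rule power_mod_four, simp)+
  moreover have "w mod 4 = 0 \<or> w mod 4 = 1 \<or> w mod 4 = 2 \<or> w mod 4 = 3"
    by presburger
  ultimately show ?thesis
    unfolding dvd_eq_mod_eq_0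
    by (elim disjE) (simp_all add: numeral_3_eq_3 numeral_2_eq_2 field_simps)
qed

section \<open>The square signature\<close>

lemma finite_grp: "finite (grp n)"
proof (rule finite_subset)
  show "grp n \<subseteq> (\<lambda>S i. i \<in> S) ` Pow {..<n}"
  proof
    fix x assume "x \<in> grp n"
    then have "x = (\<lambda>i. i \<in> {i. i < n \<and> x i})"
      by (auto simp: grp_def not_less[symmetric])
    then show "x \<in> (\<lambda>S i. i \<in> S) ` Pow {..<n}"
      by blast
  qed
qed simp

lemma grp_Suc: "grp (Suc n) = grp n \<union> (\<lambda>x. x(n := True)) ` grp n"
proof (intro set_eqI iffI)
  fix x assume x: "x \<in> grp (Suc n)"
  show "x \<in> grp n \<union> (\<lambda>x. x(n := True)) ` grp n"
  proof (cases "x n")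
    case True
    then have "x = (x(n := False))(n := True)" and "x(n := False) \<in> grp n"
      using x by (auto simp: grp_def fun_eq_iff)
    then show ?thesis
      by blast
  next
    case False
    then have "x \<in> grp n"
      using x by (auto simp: grp_def) (metis Suc_leI le_neq_implies_less)
    then show ?thesis
      by blast
  qed
qed (auto simp: grp_def)

lemma sum_grp_prod:
  "(\<Sum>x\<in>grp n. \<Prod>i<n. if x i then a i else 1) = (\<Prod>i<n. 1 + a i :: 'a::comm_semiring_1)"
proof (induction n)
  case 0
  have "grp 0 = {\<lambda>i. False}"
    by (auto simp: grp_def)
  then show ?case
    by simp
next
  case (Suc n)
  let ?set = "\<lambda>x::idx. x(n := True)"
  have disjoint: "grp n \<inter> ?set ` grp n = {}"
    by (auto simp: grp_def)
  have inj: "inj_on ?set (grp n)"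
  proof (rule inj_onI)
    fix x y assume "x \<in> grp n" "y \<in> grp n" "x(n := True) = y(n := True)"
    then show "x = y"
      by (auto simp: grp_def fun_eq_iff) (metis order_refl)+
  qed
  have "(\<Sum>x\<in>grp n. \<Prod>i<Suc n. if x i then a i else 1) = (\<Sum>x\<in>grp n. \<Prod>i<n. if x i then a i else 1)"
    by (rule sum.cong) (auto simp: grp_def)
  moreover have "(\<Sum>x\<in>?set ` grp n. \<Prod>i<Suc n. if x i then a i else 1) =
      (\<Sum>x\<in>grp n. (\<Prod>i<n. if x i then a i else 1) * a n)"
    by (subst sum.reindex[OF inj]) (auto intro!: sum.cong prod.cong)
  ultimately show ?case
    unfolding grp_Suc sum.union_disjoint[OF finite_grp finite_imageI[OF finite_grp] disjoint]
    by (simp add: sum_distrib_left[symmetric] Suc algebra_simps)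
qed

lemma sum_grp_weight_power:
  fixes t :: "'a::comm_ring_1"
  assumes "p \<le> n"
  shows "(\<Sum>x\<in>grp n. t ^ weight n x * (-1) ^ (\<Sum>i<p. of_bool (x i))) =
    (1 - t) ^ p * (1 + t) ^ (n - p)"
proof -
  have "t ^ weight n x * (-1) ^ (\<Sum>i<p. of_bool (x i)) =
      (\<Prod>i<n. if x i then t * (if i < p then -1 else 1) else 1)" for x
  proof -
    have "(\<Sum>i<p. of_bool (x i)) = (\<Sum>i<n. of_bool (x i \<and> i < p) :: nat)"
      using assms by (intro sum.mono_neutral_cong_left) auto
    moreover have "t ^ weight m x * (-1) ^ (\<Sum>i<m. of_bool (x i \<and> i < p)) =
        (\<Prod>i<m. if x i then t * (if i < p then -1 else 1) else 1)" for m
      by (induction m) (auto simp: weight_def power_add ac_simps)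
    ultimately show ?thesis
      by simp
  qed
  moreover have "(\<Prod>i<m. 1 + t * (if i < p then -1 else 1)) =
      (1 - t) ^ min m p * (1 + t) ^ (m - p)" for m
  proof (induction m)
    case (Suc m)
    then show ?case
      by (cases "m < p") (auto simp: min_def Suc_diff_le algebra_simps)
  qed simp
  ultimately show ?thesis
    using assms by (simp add: sum_grp_prod min_absorb2)
qed

text \<open>The number of basis elements of \<open>O\<^sub>p\<^sub>,\<^sub>n\<^sub>-\<^sub>p\<close> squaring to \<open>u\<^sub>0\<close> minus the number squaring to
  \<open>-u\<^sub>0\<close>; it is complex-valued so that it can be evaluated by a roots-of-unity filter.\<close>
definition square_signature :: "nat \<Rightarrow> nat \<Rightarrow> complex" where
  "square_signature n p = (\<Sum>x\<in>grp n. (-1) ^ twist n p x x)"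

lemma square_signature_eq:
  assumes "p \<le> n"
  shows "square_signature n p =
    (- (0 ^ p * 2 ^ (n - p)) + 2 ^ p * 0 ^ (n - p) +
      (1 - \<i>) ^ p * (1 + \<i>) ^ (n - p) + (1 + \<i>) ^ p * (1 - \<i>) ^ (n - p)) / 2"
proof -
  define G where "G t = (\<Sum>x\<in>grp n. t ^ weight n x * (-1) ^ (\<Sum>i<p. of_bool (x i)))" for t :: complex
  have "(-1) ^ twist n p x x =
      (- (1 ^ w * s) + (-1) ^ w * s + \<i> ^ w * s + (-\<i>) ^ w * s) / (2::complex)"
    if "w = weight n x" "s = (-1) ^ (\<Sum>i<p. of_bool (x i))" for x w s
  proof -
    have "(-1::complex) ^ twist n p x x = (-1) ^ (3 * (w choose 3) + (w choose 2) + w) * s"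
      unfolding that twist_diag by (rule power_add)
    also have "\<dots> = (if 4 dvd w then 1 else -1) * s"
      by (simp only: neg_one_power_diag_weight)
    finally have "(-1::complex) ^ twist n p x x = (if 4 dvd w then 1 else -1) * s" .
    then show ?thesis
      by (simp add: sign_four_dvd_roots_of_unity field_simps)
  qed
  then have "square_signature n p = (- G 1 + G (-1) + G \<i> + G (-\<i>)) / 2"
    unfolding square_signature_def G_def
    by (simp only: sum_divide_distrib[symmetric] sum.distrib sum_negf)
  moreover have "G t = (1 - t) ^ p * (1 + t) ^ (n - p)" for t
    unfolding G_def using assms by (rule sum_grp_weight_power)
  ultimately show ?thesis
    by simp
qed

lemma square_signature_self:
  "0 < n \<Longrightarrow> square_signature n n = (2 ^ n + (1 - \<i>) ^ n + (1 + \<i>) ^ n) / 2"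
  by (simp add: square_signature_eq power_0_left)

lemma square_signature_zero:
  "0 < n \<Longrightarrow> square_signature n 0 = (- (2 ^ n) + (1 - \<i>) ^ n + (1 + \<i>) ^ n) / 2"
  by (simp add: square_signature_eq power_0_left algebra_simps)

definition mixed_signature :: "nat \<Rightarrow> nat \<Rightarrow> complex" where
  "mixed_signature s t = ((1 - \<i>) ^ s * (1 + \<i>) ^ t + (1 + \<i>) ^ s * (1 - \<i>) ^ t) / 2"

lemma square_signature_mixed:
  "1 \<le> p \<Longrightarrow> 1 \<le> q \<Longrightarrow> square_signature (p + q) p = mixed_signature p q"
  by (simp add: square_signature_eq mixed_signature_def power_0_left)

lemma norm_one_plus_minus_ii: "cmod (1 + \<i>) = sqrt 2" "cmod (1 - \<i>) = sqrt 2"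
  by (simp_all add: cmod_def)

lemma norm_mixed_signature_le: "cmod (mixed_signature s t) \<le> sqrt 2 ^ (s + t)"
proof -
  have "cmod (mixed_signature s t) \<le>
      (cmod ((1 - \<i>) ^ s * (1 + \<i>) ^ t) + cmod ((1 + \<i>) ^ s * (1 - \<i>) ^ t)) / 2"
    unfolding mixed_signature_def by (simp add: norm_triangle_ineq divide_right_mono)
  also have "\<dots> = sqrt 2 ^ (s + t)"
    by (simp add: norm_mult norm_power norm_one_plus_minus_ii power_add)
  finally show ?thesis .
qed

text \<open>The dominant term is \<open>2^n/2\<close>; the other two have modulus \<open>\<surd>2^n/2\<close> each, which is
  small enough exactly when \<open>\<surd>2^n > 4\<close>, i.e. \<open>n \<ge> 5\<close>.\<close>
lemma norm_unmixed_signature_gt: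
  assumes "n \<ge> 5" and "e = 1 \<or> e = -1"
  shows "cmod ((e * 2 ^ n + (1 - \<i>) ^ n + (1 + \<i>) ^ n) / 2) > sqrt 2 ^ n"
proof -
  define r where "r = sqrt 2 ^ n"
  have r_square: "r * r = 2 ^ n"
    unfolding r_def by (simp flip: power_mult_distrib)
  have "r * r > 4 * 4"
    using power_increasing[OF assms(1), of "2::real"] r_square by simp
  then have "r > 4"
    using mult_mono[of r 4 r 4] r_def by force
  then have "2 ^ n > 4 * r"
    using r_square mult_strict_right_mono[of 4 r r] by simp
  have "cmod ((1 - \<i>) ^ n + (1 + \<i>) ^ n) \<le> cmod ((1 - \<i>) ^ n) + cmod ((1 + \<i>) ^ n)"
    by (rule norm_triangle_ineq)
  also have "\<dots> = 2 * r"
    by (simp add: norm_power norm_one_plus_minus_ii r_def)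
  finally have "cmod ((1 - \<i>) ^ n + (1 + \<i>) ^ n) \<le> 2 * r" .
  moreover have "cmod (e * 2 ^ n) = 2 ^ n"
    using assms(2) by (auto simp: norm_power)
  moreover have "cmod (e * 2 ^ n) - cmod ((1 - \<i>) ^ n + (1 + \<i>) ^ n) \<le>
      cmod (e * 2 ^ n + ((1 - \<i>) ^ n + (1 + \<i>) ^ n))"
    by (metis norm_diff_ineq norm_minus_cancel diff_minus_eq_add)
  ultimately show ?thesis
    using \<open>2 ^ n > 4 * r\<close> unfolding r_def by (simp add: norm_divide add.assoc)
qed

lemma square_signature_unmixed_ne_mixed:
  assumes "n \<ge> 5" "p + q = n" "1 \<le> p" "1 \<le> q"
  shows "square_signature n n \<noteq> square_signature (p + q) p"
    and "square_signature n 0 \<noteq> square_signature (p + q) p"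
proof -
  have "cmod (square_signature (p + q) p) \<le> sqrt 2 ^ n"
    unfolding square_signature_mixed[OF assms(3,4)] assms(2)[symmetric]
    by (rule norm_mixed_signature_le)
  moreover have "cmod (square_signature n n) > sqrt 2 ^ n"
    using norm_unmixed_signature_gt[OF assms(1), of 1] assms(1) by (simp add: square_signature_self)
  moreover have "cmod (square_signature n 0) > sqrt 2 ^ n"
    using norm_unmixed_signature_gt[OF assms(1), of "-1"] assms(1)
    by (simp add: square_signature_zero)
  ultimately show "square_signature n n \<noteq> square_signature (p + q) p"
    and "square_signature n 0 \<noteq> square_signature (p + q) p"
    by auto
qed

lemma one_plus_minus_ii_power_four: "(1 + \<i>) ^ 4 = -4" "(1 - \<i>) ^ 4 = -4"
  by (simp_all add: complex_eq_iff numeral_eq_Suc)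

lemma mixed_signature_add_four: "mixed_signature (4 * k + s) t = (-4) ^ k * mixed_signature s t"
proof -
  have "(1 + \<i>) ^ (4 * k + s) = (-4) ^ k * (1 + \<i>) ^ s"
    "(1 - \<i>) ^ (4 * k + s) = (-4) ^ k * (1 - \<i>) ^ s"
    by (simp_all only: power_add power_mult one_plus_minus_ii_power_four)
  then show ?thesis
    by (simp add: mixed_signature_def algebra_simps)
qed

lemma mixed_signature_values:
  "mixed_signature 7 1 = 0" "mixed_signature 6 2 = -16" "mixed_signature 4 4 = 16"
  "mixed_signature 4 1 = -4" "mixed_signature 3 2 = 4"
  "mixed_signature 5 1 = -8" "mixed_signature 4 2 = 0" "mixed_signature 3 3 = 8"
  "mixed_signature 6 1 = -8" "mixed_signature 4 3 = 8"
  by (simp_all add: mixed_signature_def complex_eq_iff numeral_eq_Suc)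

section \<open>Graded isomorphisms preserve the square signature\<close>

definition gzero :: idx where
  "gzero = (\<lambda>_. False)"

lemma gzero_grp: "gzero \<in> grp n"
  by (simp add: gzero_def grp_def)

lemma gadd_self: "gadd x x = gzero"
  by (simp add: gadd_def gzero_def)

lemma twist_gzero: "twist n p gzero gzero = 0"
  by (simp add: twist_def gzero_def)

lemma ubase_octc: "x \<in> grp n \<Longrightarrow> ubase x \<in> octc n"
  by (auto simp: ubase_def octc_def)

lemma scale_octc: "a \<in> octc n \<Longrightarrow> (\<lambda>z. c * a z) \<in> octc n"
  by (auto simp: octc_def)

lemma oct_mult_ubase_self:
  assumes "x \<in> grp (p + q)"
  shows "oct_mult p q (\<lambda>z. c * ubase x z) (\<lambda>z. c * ubase x z) =
    (\<lambda>z. c * c * (-1) ^ twist (p + q) p x x * ubase gzero z)"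
proof
  fix z
  let ?k = "c * c * (-1) ^ twist (p + q) p x x * ubase gzero z"
  have "(if gadd x' y' = z then (-1) ^ twist (p + q) p x' y' * (c * ubase x x') * (c * ubase x y')
      else 0) = (if x' = x then if y' = x then ?k else 0 else 0)" for x' y'
    by (auto simp: ubase_def gadd_self)
  moreover have "(\<Sum>y'\<in>grp (p + q). if x' = x then if y' = x then ?k else 0 else 0) =
      (if x' = x then ?k else 0)" for x'
    using assms by (simp add: sum.delta finite_grp)
  ultimately show "oct_mult p q (\<lambda>z. c * ubase x z) (\<lambda>z. c * ubase x z) z = ?k"
    unfolding oct_mult_def using assms by (simp add: sum.delta finite_grp)
qed

lemma neg_one_power_cases: "(-1::real) ^ k = 1 \<or> (-1::real) ^ k = -1"
  by (cases "even k") auto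

locale graded_isomorphism =
  fixes p q p' q' :: nat and \<phi> :: "(idx \<Rightarrow> real) \<Rightarrow> (idx \<Rightarrow> real)"
  assumes graded_iso: "graded_iso p q p' q' \<phi>"
begin

lemma dim_eq: "p' + q' = p + q"
  using graded_iso by (simp add: graded_iso_def)

lemma inj_on_octc: "inj_on \<phi> (octc (p + q))"
  using graded_iso by (auto simp: graded_iso_def dest: bij_betw_imp_inj_on)

lemma map_scale: "a \<in> octc (p + q) \<Longrightarrow> \<phi> (\<lambda>z. c * a z) = (\<lambda>z. c * \<phi> a z)"
  using graded_iso by (simp add: graded_iso_def)

lemma map_mult:
  "a \<in> octc (p + q) \<Longrightarrow> b \<in> octc (p + q) \<Longrightarrow> \<phi> (oct_mult p q a b) = oct_mult p' q' (\<phi> a) (\<phi> b)"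
  using graded_iso by (simp add: graded_iso_def)

lemma ubase_image:
  assumes x: "x \<in> grp (p + q)"
  obtains c y where "c \<noteq> 0" "y \<in> grp (p + q)" "\<phi> (ubase x) = (\<lambda>z. c * ubase y z)"
proof -
  have "homogeneous (p + q) (ubase x)"
    unfolding homogeneous_def using x by (intro exI[of _ 1] bexI[OF _ x]) simp
  then have "homogeneous (p + q) (\<phi> (ubase x))"
    using graded_iso ubase_octc[OF x] dim_eq by (simp add: graded_iso_def)
  then obtain c y where y: "y \<in> grp (p + q)" and c: "\<phi> (ubase x) = (\<lambda>z. c * ubase y z)"
    unfolding homogeneous_def by blast
  have "c \<noteq> 0"
  proof
    assume "c = 0"
    then have "\<phi> (ubase x) = \<phi> (\<lambda>z. 0 * ubase x z)"
      using c map_scale[OF ubase_octc[OF x], of 0] by simp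
    then have "ubase x = (\<lambda>z. 0 * ubase x z)"
      by (rule inj_onD[OF inj_on_octc _ ubase_octc[OF x] scale_octc[OF ubase_octc[OF x]]])
    then show False
      by (metis ubase_def mult_zero_left zero_neq_one)
  qed
  with y c show ?thesis
    using that by blast
qed

text \<open>\<open>\<phi> u\<^sub>0\<close> is a homogeneous idempotent, and \<open>u\<^sub>0\<close> is the only one.\<close>
lemma ubase_gzero: "\<phi> (ubase gzero) = ubase gzero"
proof -
  obtain c y where c: "c \<noteq> 0" and y: "y \<in> grp (p + q)"
    and \<phi>0: "\<phi> (ubase gzero) = (\<lambda>z. c * ubase y z)"
    using ubase_image[OF gzero_grp] .
  have "oct_mult p q (ubase gzero) (ubase gzero) = ubase gzero"
    using oct_mult_ubase_self[OF gzero_grp, of p q 1] by (simp add: twist_gzero)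
  then have "\<phi> (ubase gzero) = oct_mult p' q' (\<phi> (ubase gzero)) (\<phi> (ubase gzero))"
    using map_mult ubase_octc[OF gzero_grp] by metis
  also have "\<dots> = (\<lambda>z. c * c * (-1) ^ twist (p + q) p' y y * ubase gzero z)"
    unfolding \<phi>0 using oct_mult_ubase_self[of y p' q' c] y dim_eq by simp
  finally have eq: "c * ubase y z = c * c * (-1) ^ twist (p + q) p' y y * ubase gzero z" for z
    unfolding \<phi>0 by metis
  have "y = gzero"
    using eq[of y] c by (auto simp: ubase_def split: if_splits)
  then have "c = 1"
    using eq[of gzero] c by (simp add: ubase_def twist_gzero)
  then show ?thesis
    using \<phi>0 \<open>y = gzero\<close> by simp
qed

lemma square_sign_eq:
  assumes x: "x \<in> grp (p + q)" and y: "y \<in> grp (p + q)" and c: "c \<noteq> 0"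
    and \<phi>x: "\<phi> (ubase x) = (\<lambda>z. c * ubase y z)"
  shows "even (twist (p + q) p x x) \<longleftrightarrow> even (twist (p + q) p' y y)"
proof -
  let ?s = "(-1::real) ^ twist (p + q) p x x" and ?s' = "(-1::real) ^ twist (p + q) p' y y"
  have "oct_mult p q (ubase x) (ubase x) = (\<lambda>z. ?s * ubase gzero z)"
    using oct_mult_ubase_self[OF x, of 1] by simp
  then have "(\<lambda>z. ?s * ubase gzero z) = oct_mult p' q' (\<phi> (ubase x)) (\<phi> (ubase x))"
    using map_mult[OF ubase_octc[OF x] ubase_octc[OF x]] map_scale[OF ubase_octc[OF gzero_grp]]
      ubase_gzero by metis
  also have "\<dots> = (\<lambda>z. c * c * ?s' * ubase gzero z)"
    unfolding \<phi>x using oct_mult_ubase_self[of y p' q' c] y dim_eq by simp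
  finally have "?s = c * c * ?s'"
    by (metis mult_1_right ubase_def)
  moreover have "c * c > 0"
    using c by (auto simp: zero_less_mult_iff linorder_neq_iff)
  moreover have "?s = 1 \<or> ?s = -1" "?s' = 1 \<or> ?s' = -1"
    by (rule neg_one_power_cases)+
  ultimately have "?s = ?s'"
    by (auto simp: mult_less_0_iff)
  then show ?thesis
    by (simp add: minus_one_power_iff split: if_splits)
qed

lemma ubase_image_inj:
  assumes x: "x \<in> grp (p + q)" and y: "y \<in> grp (p + q)" and "c \<noteq> 0" "d \<noteq> 0"
    and \<phi>x: "\<phi> (ubase x) = (\<lambda>z. c * ubase w z)" and \<phi>y: "\<phi> (ubase y) = (\<lambda>z. d * ubase w z)"
  shows "x = y"
proof -
  have "\<phi> (\<lambda>z. (c / d) * ubase y z) = \<phi> (ubase x)"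
    unfolding map_scale[OF ubase_octc[OF y]] \<phi>x \<phi>y using \<open>d \<noteq> 0\<close> by simp
  then have "(\<lambda>z. (c / d) * ubase y z) = ubase x"
    by (rule inj_onD[OF inj_on_octc _ scale_octc[OF ubase_octc[OF y]] ubase_octc[OF x]])
  then have "(c / d) * ubase y x = 1"
    by (metis ubase_def)
  then show ?thesis
    by (auto simp: ubase_def split: if_splits)
qed

theorem square_signature_invariant: "square_signature (p + q) p = square_signature (p' + q') p'"
proof -
  have "\<forall>x\<in>grp (p + q). \<exists>c y. c \<noteq> 0 \<and> y \<in> grp (p + q) \<and> \<phi> (ubase x) = (\<lambda>z. c * ubase y z)"
    using ubase_image by metis
  then obtain c \<sigma> where c\<sigma>: "\<And>x. x \<in> grp (p + q) \<Longrightarrow>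
      c x \<noteq> 0 \<and> \<sigma> x \<in> grp (p + q) \<and> \<phi> (ubase x) = (\<lambda>z. c x * ubase (\<sigma> x) z)"
    by metis
  have "inj_on \<sigma> (grp (p + q))"
    by (rule inj_onI) (use c\<sigma> ubase_image_inj in metis)
  moreover have "\<sigma> ` grp (p + q) = grp (p + q)"
    using endo_inj_surj[OF finite_grp _ calculation] c\<sigma> by blast
  moreover have "even (twist (p + q) p x x) \<longleftrightarrow> even (twist (p + q) p' (\<sigma> x) (\<sigma> x))"
    if "x \<in> grp (p + q)" for x
    using c\<sigma>[OF that] square_sign_eq[OF that] by blast
  ultimately show ?thesis
    unfolding square_signature_def dim_eq
    by (metis (no_types, lifting) minus_one_power_iff sum.reindex_cong)
qed

end

lemma graded_noniso_if_square_signature_ne: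
  "square_signature (p + q) p \<noteq> square_signature (p' + q') p' \<Longrightarrow> graded_noniso p q p' q'"
  unfolding graded_noniso_def graded_isomorphic_def
  by (metis graded_isomorphism.intro graded_isomorphism.square_signature_invariant)

lemma graded_noniso_codim:
  assumes "n = 4 * k + s + t" "n = 4 * k + s' + t'" "1 \<le> s" "1 \<le> t" "1 \<le> s'" "1 \<le> t'"
    and "mixed_signature s t \<noteq> mixed_signature s' t'"
  shows "graded_noniso (n - t) t (n - t') t'"
proof (rule graded_noniso_if_square_signature_ne)
  have "square_signature (4 * k + a + b) (4 * k + a) = (-4) ^ k * mixed_signature a b"
    if "1 \<le> a" "1 \<le> b" for a b
    using that by (simp add: square_signature_mixed mixed_signature_add_four)
  moreover have "n - t = 4 * k + s" "n - t' = 4 * k + s'"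
    using assms(1,2) by simp_all
  ultimately show "square_signature (n - t + t) (n - t) \<noteq> square_signature (n - t' + t') (n - t')"
    using assms(3-7) by simp
qed

lemma graded_noniso_codims_mod_4_eq_0:
  assumes "n mod 4 = 0" "n \<ge> 5"
  shows "graded_noniso (n - 1) 1 (n - 2) 2 \<and> graded_noniso (n - 1) 1 (n - 4) 4 \<and>
    graded_noniso (n - 2) 2 (n - 4) 4"
proof -
  have "\<exists>k. n = 4 * k + 8"
    using assms by presburger
  then obtain k where "n = 4 * k + 8" ..
  then show ?thesis
    using graded_noniso_codim[of n k 7 1 6 2, unfolded mixed_signature_values]
      graded_noniso_codim[of n k 7 1 4 4, unfolded mixed_signature_values]
      graded_noniso_codim[of n k 6 2 4 4, unfolded mixed_signature_values]
    by simp
qed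

lemma graded_noniso_codims_mod_4_eq_1:
  assumes "n mod 4 = 1" "n \<ge> 5"
  shows "graded_noniso (n - 1) 1 (n - 2) 2"
proof -
  have "\<exists>k. n = 4 * k + 5"
    using assms by presburger
  then obtain k where "n = 4 * k + 5" ..
  then show ?thesis
    using graded_noniso_codim[of n k 4 1 3 2, unfolded mixed_signature_values] by simp
qed

lemma graded_noniso_codims_mod_4_eq_2:
  assumes "n mod 4 = 2" "n \<ge> 5"
  shows "graded_noniso (n - 1) 1 (n - 2) 2 \<and> graded_noniso (n - 1) 1 (n - 3) 3 \<and>
    graded_noniso (n - 2) 2 (n - 3) 3"
proof -
  have "\<exists>k. n = 4 * k + 6"
    using assms by presburger
  then obtain k where "n = 4 * k + 6" ..
  then show ?thesis
    using graded_noniso_codim[of n k 5 1 4 2, unfolded mixed_signature_values]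
      graded_noniso_codim[of n k 5 1 3 3, unfolded mixed_signature_values]
      graded_noniso_codim[of n k 4 2 3 3, unfolded mixed_signature_values]
    by simp
qed

lemma graded_noniso_codims_mod_4_eq_3:
  assumes "n mod 4 = 3" "n \<ge> 5"
  shows "graded_noniso (n - 1) 1 (n - 3) 3"
proof -
  have "\<exists>k. n = 4 * k + 7"
    using assms by presburger
  then obtain k where "n = 4 * k + 7" ..
  then show ?thesis
    using graded_noniso_codim[of n k 6 1 4 3, unfolded mixed_signature_values] by simp
qed

theorem mainTheorem12:
  fixes n :: nat
  assumes "n \<ge> 5"
  shows "(\<forall>p q. p + q = n \<and> p \<ge> 1 \<and> q \<ge> 1 \<longrightarrow>
             graded_noniso n 0 p q \<and> graded_noniso 0 n p q)
       \<and> (n mod 4 = 0 \<longrightarrow>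
             graded_noniso (n-1) 1 (n-2) 2 \<and> graded_noniso (n-1) 1 (n-4) 4 \<and>
             graded_noniso (n-2) 2 (n-4) 4)
       \<and> (n mod 4 = 1 \<longrightarrow> graded_noniso (n-1) 1 (n-2) 2)
       \<and> (n mod 4 = 2 \<longrightarrow>
             graded_noniso (n-1) 1 (n-2) 2 \<and> graded_noniso (n-1) 1 (n-3) 3 \<and>
             graded_noniso (n-2) 2 (n-3) 3)
       \<and> (n mod 4 = 3 \<longrightarrow> graded_noniso (n-1) 1 (n-3) 3)"
proof -
  have "graded_noniso n 0 p q \<and> graded_noniso 0 n p q" if "p + q = n" "1 \<le> p" "1 \<le> q" for p q
    using square_signature_unmixed_ne_mixed[OF assms that]
    by (auto intro!: graded_noniso_if_square_signature_ne)
  then show ?thesis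
    using graded_noniso_codims_mod_4_eq_0[OF _ assms] graded_noniso_codims_mod_4_eq_1[OF _ assms]
      graded_noniso_codims_mod_4_eq_2[OF _ assms] graded_noniso_codims_mod_4_eq_3[OF _ assms]
    by blast
qed

end
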